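(* Impose (A1)–(A6), (A8) and (A10), and suppose $\mathcal Y^*=\mathbb R$. Then for every $\epsilon>0$, $\bar u\in[0,1]$, $\bar x\in\mathcal X$ and $\delta\in\mathbb R$ there exist random variables $(\tilde Y_0^*,\tilde Y_1^*,\tilde U,\tilde V)$, defined jointly with $(Z,X)$, such that (1) $\mathbb E[\tilde Y_1^*-\tilde Y_0^*\mid X=\bar x,\tilde U=\bar u,\tilde S_0=1,\tilde S_1=1]=\delta$; (2) $\mathbb P[(\tilde Y_0^*,\tilde Y_1^*,\tilde V)\in\mathcal Y^*\times\mathcal Y^*\times[0,1]\mid X=\bar x,\tilde U=u]=1$ for every $u\in[0,1]$; (3) $F_{\tilde V\mid X,\tilde U}$ is a continuous function of the value of $\tilde U$; (4) $F_{\tilde Y_0^*,\tilde Y_1^*\mid X,\tilde U,\tilde V}$ is a continuous function of the value of $\tilde U$; (5) $|F_{\tilde Y,\tilde D,\tilde S,Z,X}(y,d,s,z,\bar x)-F_{Y,D,S,Z,X}(y,d,s,z,\bar x)|\le\epsilon$ for all $(y,d,s,z)\in\mathbb R^4$.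
   Context: Standing setup. On a common probability space: $X$ (covariates, support $\mathcal X$), $Z$ (instrument, support $\mathcal Z$), $W=(X,Z)$; latent real random variables $U,V$, jointly continuously distributed conditional on $X$, with $U\mid X$ and $V\mid X$ each Uniform$[0,1]$ (their joint dependence unrestricted); real potential outcomes of interest $Y_0^*,Y_1^*$. Given functions $P:\mathcal X\times\mathcal Z\to[0,1]$ and $Q:\{0,1\}\times\mathcal X\to[0,1]$, define the treatment $D=\mathbf 1\{P(W)\ge U\}$, potential selection indicators $S_d=\mathbf 1\{Q(d,X)\ge V\}$ ($d\in\{0,1\}$), selection indicator $S=DS_1+(1-D)S_0$, potential observable outcomes $Y_d=S_dY_d^*$ and observable outcome $Y=DY_1+(1-D)Y_0$. For $x\in\mathcal X$, $u\in[0,1]$, $d\in\{0,1\}$: $m_d^Y(x,u)=\mathbb E[Y_d\mid X=x,U=u]$, $m_d^S(x,u)=\mathbb E[S_d\mid X=x,U=u]$, $\Delta_S=m_1^S-m_0^S$. The functions $m_0^Y,m_1^Y,m_0^S,\Delta_S$ are assumed point identified at every $(x,u)$; ratios of them are assumed well defined. Assumptions: (A1) $Z$ is independent of $(U,V,Y_0^*,Y_1^* )$ conditional on $X$; (A2) the distribution of $P(W)$ given $X$ is nondegenerate; (A3) $\mathbb E|Y_d^*|<\infty$ and $\mathbb E[(Y_d^* )^2]<\infty$; (A4) $0<\mathbb P[D=1\mid X]<1$; (A5) $X$ is invariant to counterfactual manipulation of treatment; (A6) $Y_0^*,Y_1^*$ have a common support $\mathcal Y^*\subseteq\mathbb R$;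 (A8) $Q(1,x)>Q(0,x)>0$ for all $x\in\mathcal X$; (A10) the conditional cdfs $F_{V\mid X,U}$ and $F_{Y_0^*,Y_1^*\mid X,U,V}$ are continuous functions of the value of $U$. Candidate construction: given $(\tilde Y_0^*,\tilde Y_1^*,\tilde U,\tilde V)$, set $\tilde D=\mathbf 1\{P(X,Z)\ge\tilde U\}$, $\tilde S_d=\mathbf 1\{Q(d,X)\ge\tilde V\}$, $\tilde S=\tilde D\tilde S_1+(1-\tilde D)\tilde S_0$, $\tilde Y_d=\tilde S_d\tilde Y_d^*$, $\tilde Y=\tilde D\tilde Y_1+(1-\tilde D)\tilde Y_0$. $F$ with subscripts denotes a (conditional) joint cumulative distribution function. *)

theory Defs
  imports "HOL-Probability.Probability"
begin

text \<open>
Everything is described conditionally on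
the covariate value x.  Given X = x:
  Z has law muZ x;  U is Uniform[0,1] and independent of Z (assumption A1 and
  the normalisation of U); V given (X = x, U = u) has law kV x u;
  (Y0*, Y1*) given (X = x, U = u, V = v) has law kY x u v.
A point of the outcome space is (z, u, v, y0s, y1s).
\<close>

definition unif01 :: "real measure" where
  "unif01 = uniform_measure lborel {0..1}"

definition lawVY ::
  "('x \<Rightarrow> real \<Rightarrow> real measure) \<Rightarrow> ('x \<Rightarrow> real \<Rightarrow> real \<Rightarrow> (real \<times> real) measure)
   \<Rightarrow> 'x \<Rightarrow> real \<Rightarrow> (real \<times> (real \<times> real)) measure" where
  "lawVY kV kY x u = kV x u \<bind> (\<lambda>v. kY x u v \<bind> (\<lambda>y. return borel (v, y)))"

definition lawX ::
  "('x \<Rightarrow> real measure) \<Rightarrow> ('x \<Rightarrow> real \<Rightarrow> real measure)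
   \<Rightarrow> ('x \<Rightarrow> real \<Rightarrow> real \<Rightarrow> (real \<times> real) measure)
   \<Rightarrow> 'x \<Rightarrow> (real \<times> real \<times> real \<times> real \<times> real) measure" where
  "lawX muZ kV kY x =
     muZ x \<bind> (\<lambda>z. unif01 \<bind> (\<lambda>u. lawVY kV kY x u \<bind>
        (\<lambda>(v, y0, y1). return borel (z, u, v, y0, y1))))"

definition Zof :: "real \<times> real \<times> real \<times> real \<times> real \<Rightarrow> real" where
  "Zof w = fst w"
definition Uof :: "real \<times> real \<times> real \<times> real \<times> real \<Rightarrow> real" where
  "Uof w = fst (snd w)"
definition Vof :: "real \<times> real \<times> real \<times> real \<times> real \<Rightarrow> real" where
  "Vof w = fst (snd (snd w))"
definition Ystar :: "nat \<Rightarrow> real \<times> real \<times> real \<times> real \<times> real \<Rightarrow> real" where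
  "Ystar d w = (if d = 1 then snd (snd (snd (snd w))) else fst (snd (snd (snd w))))"

definition Dobs :: "('x \<Rightarrow> real \<Rightarrow> real) \<Rightarrow> 'x \<Rightarrow> real \<times> real \<times> real \<times> real \<times> real \<Rightarrow> real" where
  "Dobs P x w = (if P x (Zof w) \<ge> Uof w then 1 else 0)"
definition Sd :: "(nat \<Rightarrow> 'x \<Rightarrow> real) \<Rightarrow> nat \<Rightarrow> 'x \<Rightarrow> real \<times> real \<times> real \<times> real \<times> real \<Rightarrow> real" where
  "Sd Q d x w = (if Q d x \<ge> Vof w then 1 else 0)"
definition Sobs :: "('x \<Rightarrow> real \<Rightarrow> real) \<Rightarrow> (nat \<Rightarrow> 'x \<Rightarrow> real) \<Rightarrow> 'x \<Rightarrow> real \<times> real \<times> real \<times> real \<times> real \<Rightarrow> real" where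
  "Sobs P Q x w = Dobs P x w * Sd Q 1 x w + (1 - Dobs P x w) * Sd Q 0 x w"
definition Yd :: "(nat \<Rightarrow> 'x \<Rightarrow> real) \<Rightarrow> nat \<Rightarrow> 'x \<Rightarrow> real \<times> real \<times> real \<times> real \<times> real \<Rightarrow> real" where
  "Yd Q d x w = Sd Q d x w * Ystar d w"
definition Yobs :: "('x \<Rightarrow> real \<Rightarrow> real) \<Rightarrow> (nat \<Rightarrow> 'x \<Rightarrow> real) \<Rightarrow> 'x \<Rightarrow> real \<times> real \<times> real \<times> real \<times> real \<Rightarrow> real" where
  "Yobs P Q x w = Dobs P x w * Yd Q 1 x w + (1 - Dobs P x w) * Yd Q 0 x w"

definition cdfYDSZ ::
  "('x \<Rightarrow> real \<Rightarrow> real) \<Rightarrow> (nat \<Rightarrow> 'x \<Rightarrow> real) \<Rightarrow> ('x \<Rightarrow> real measure) \<Rightarrow> ('x \<Rightarrow> real \<Rightarrow> real measure)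
   \<Rightarrow> ('x \<Rightarrow> real \<Rightarrow> real \<Rightarrow> (real \<times> real) measure) \<Rightarrow> 'x \<Rightarrow> real \<Rightarrow> real \<Rightarrow> real \<Rightarrow> real \<Rightarrow> real" where
  "cdfYDSZ P Q muZ kV kY x y d s z =
     measure (lawX muZ kV kY x)
       {w. Yobs P Q x w \<le> y \<and> Dobs P x w \<le> d \<and> Sobs P Q x w \<le> s \<and> Zof w \<le> z}"

definition msupport :: "real measure \<Rightarrow> real set" where
  "msupport M = {y. \<forall>e>0. emeasure M (ball y e) \<noteq> 0}"

definition lawYstar ::
  "'x measure \<Rightarrow> ('x \<Rightarrow> real measure) \<Rightarrow> ('x \<Rightarrow> real \<Rightarrow> real measure)
   \<Rightarrow> ('x \<Rightarrow> real \<Rightarrow> real \<Rightarrow> (real \<times> real) measure) \<Rightarrow> nat \<Rightarrow> real measure" where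
  "lawYstar muX muZ kV kY d = muX \<bind> (\<lambda>x. distr (lawX muZ kV kY x) borel (Ystar d))"

definition has_lebesgue_density :: "('a::euclidean_space) measure \<Rightarrow> bool" where
  "has_lebesgue_density N \<longleftrightarrow> (\<exists>f \<in> borel_measurable lborel. N = density lborel f)"

end

theory Submission
  imports Defs
begin

text \<open>
Perturb the kernels of the model only for U near \<open>ubar\<close>: with the tent weight
\<open>bump h ubar u\<close>, V given U = u is drawn from Uniform[0,1] and (Y0*, Y1*) from the point mass
at (0, delta), and otherwise from the original kernels. At u = ubar the point mass makes the
conditional mean of Y1* - Y0* equal to delta, while the continuity of the tent weight preserves
continuity of the conditional cdfs in u. Since U is uniform and independent of Z, the law of
the observables at \<open>xbar\<close> changes only on the event |U - ubar| < h, of probability at most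
2h = eps.
\<close>

lemma sets_prob_algebra_borel:
  "M \<in> space (prob_algebra (borel :: 'a::topological_space measure)) \<Longrightarrow> sets M = sets borel"
  by (simp add: space_prob_algebra)

lemma space_prob_algebra_borel:
  "M \<in> space (prob_algebra (borel :: 'a::topological_space measure)) \<Longrightarrow> space M = UNIV"
  by (metis sets_prob_algebra_borel sets_eq_imp_space_eq space_borel)

lemma measurable_prob_algebra_borel:
  assumes "M \<in> space (prob_algebra (borel :: 'a::topological_space measure))"
    and "f \<in> borel \<rightarrow>\<^sub>M N"
  shows "f \<in> M \<rightarrow>\<^sub>M N"
  using assms by (simp add: measurable_cong_sets[OF sets_prob_algebra_borel refl])

lemma emeasure_le_1_prob_algebra: "M \<in> space (prob_algebra N) \<Longrightarrow> emeasure M A \<le> 1"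
  by (simp add: space_prob_algebra prob_space.emeasure_le_1)

lemma return_in_prob_algebra: "return borel (a::'a::topological_space) \<in> space (prob_algebra borel)"
  by (simp add: space_prob_algebra prob_space_return)

lemma distr_in_prob_algebra:
  "M \<in> space (prob_algebra (borel :: 'a::topological_space measure)) \<Longrightarrow>
    f \<in> (borel :: 'a measure) \<rightarrow>\<^sub>M (borel :: 'b::topological_space measure) \<Longrightarrow>
    distr M borel f \<in> space (prob_algebra borel)"
  using measurable_space[OF measurable_distr_prob_space] .

lemma
  assumes M: "M \<in> space (prob_algebra (borel :: 'a::topological_space measure))"
    and f: "f \<in> (borel :: 'a measure) \<rightarrow>\<^sub>M (borel :: 'b::topological_space measure)"
    and S: "S \<in> sets borel"
  shows emeasure_distr_prob_algebra: "emeasure (distr M borel f) S = emeasure M (f -` S)"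
    and measure_distr_prob_algebra: "measure (distr M borel f) S = measure M (f -` S)"
  using emeasure_distr[OF measurable_prob_algebra_borel[OF M f] S]
    measure_distr[OF measurable_prob_algebra_borel[OF M f] S]
  by (simp_all add: space_prob_algebra_borel[OF M])

lemma bind_return_prob_algebra:
  assumes "M \<in> space (prob_algebra (borel :: 'a::topological_space measure))"
    and "f \<in> (borel :: 'a measure) \<rightarrow>\<^sub>M (borel :: 'b::topological_space measure)"
  shows "M \<bind> (\<lambda>y. return borel (f y)) = distr M borel f"
  by (rule bind_return_distr'[OF _ measurable_prob_algebra_borel[OF assms]])
    (simp add: space_prob_algebra_borel[OF assms(1)])

lemma measurable_emeasure_kernel:
  "K \<in> M \<rightarrow>\<^sub>M prob_algebra N \<Longrightarrow> A \<in> sets N \<Longrightarrow> (\<lambda>a. emeasure (K a) A) \<in> borel_measurable M"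
  using measurable_compose[OF measurable_prob_algebraD measurable_emeasure_subprob_algebra] .

lemma abs_measure_diff_le:
  assumes "M \<in> space (prob_algebra N)" "M' \<in> space (prob_algebra N)" "e \<ge> 0"
    and "emeasure M A \<le> emeasure M' A + ennreal e"
    and "emeasure M' A \<le> emeasure M A + ennreal e"
  shows "\<bar>measure M A - measure M' A\<bar> \<le> e"
proof -
  interpret M: prob_space M using assms(1) by (simp add: space_prob_algebra)
  interpret M': prob_space M' using assms(2) by (simp add: space_prob_algebra)
  have "measure M A \<le> measure M' A + e" "measure M' A \<le> measure M A + e"
    using assms(3-5) ennreal_le_iff[of "measure M' A + e" "measure M A"]
      ennreal_le_iff[of "measure M A + e" "measure M' A"]
    by (simp_all add: M.emeasure_eq_measure M'.emeasure_eq_measure ennreal_plus[symmetric]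
        del: ennreal_plus)
  then show ?thesis by linarith
qed

lemma nn_integral_le_plus_emeasure:
  assumes f: "f \<in> borel_measurable M" and A: "A \<in> sets M"
    and le: "\<And>v. v \<notin> A \<Longrightarrow> g v \<le> f v" and g_le_1: "\<And>v. g v \<le> 1"
  shows "(\<integral>\<^sup>+v. g v \<partial>M) \<le> (\<integral>\<^sup>+v. f v \<partial>M) + emeasure M A"
proof -
  have "(\<integral>\<^sup>+v. g v \<partial>M) \<le> (\<integral>\<^sup>+v. f v + indicator A v \<partial>M)"
    using le g_le_1 by (intro nn_integral_mono) (auto simp: add_increasing split: split_indicator)
  also have "\<dots> = (\<integral>\<^sup>+v. f v \<partial>M) + emeasure M A"
    using f A by (simp add: nn_integral_add)
  finally show ?thesis .
qed

lemma unif01_in_prob_algebra: "unif01 \<in> space (prob_algebra borel)"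
  unfolding unif01_def space_prob_algebra by (auto intro: prob_space_uniform_measure)

lemma sets_unif01 [simp, measurable_cong]: "sets unif01 = sets borel"
  unfolding unif01_def by simp

lemma emeasure_unif01: "S \<in> sets borel \<Longrightarrow> emeasure unif01 S = emeasure lborel ({0..1} \<inter> S)"
  unfolding unif01_def by (simp add: divide_ennreal_def)

lemma emeasure_unif01_atMost: "p \<in> {0..1} \<Longrightarrow> emeasure unif01 {..p} = ennreal p"
proof -
  assume p: "p \<in> {0..1}"
  have "{0..1} \<inter> {..p} = {0..p::real}" using p by auto
  then show ?thesis using p by (simp add: emeasure_unif01)
qed

lemma emeasure_unif01_greaterThan: "p \<in> {0..1} \<Longrightarrow> emeasure unif01 {p<..} = ennreal (1 - p)"
proof -
  assume p: "p \<in> {0..1}"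
  have "{0..1} \<inter> {p<..} = {p<..1::real}" using p by auto
  then show ?thesis using p by (simp add: emeasure_unif01)
qed

lemma emeasure_unif01_ball_le: "emeasure unif01 {c - h<..<c + h} \<le> ennreal (2 * h)"
proof (cases "h > 0")
  case True
  have "emeasure unif01 {c - h<..<c + h} \<le> emeasure lborel {c - h<..<c + h}"
    by (simp add: emeasure_unif01 emeasure_mono)
  then show ?thesis using True by simp
qed simp

section \<open>Mixtures of probability measures\<close>

definition mix_measure :: "real \<Rightarrow> 'a measure \<Rightarrow> 'a measure \<Rightarrow> 'a measure" where
  "mix_measure p A B = unif01 \<bind> (\<lambda>t. if t \<le> p then A else B)"

lemma measurable_mix_selector:
  fixes p :: "'a \<Rightarrow> real"
  assumes p: "p \<in> borel_measurable M" and A: "A \<in> M \<rightarrow>\<^sub>M prob_algebra N"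
    and B: "B \<in> M \<rightarrow>\<^sub>M prob_algebra N"
  shows "(\<lambda>(x, t). if t \<le> p x then A x else B x) \<in> M \<Otimes>\<^sub>M borel \<rightarrow>\<^sub>M prob_algebra N"
proof -
  have "{y \<in> space (M \<Otimes>\<^sub>M borel). snd y \<le> p (fst y)} \<in> sets (M \<Otimes>\<^sub>M borel)"
    using p by measurable
  from measurable_If[OF measurable_compose[OF measurable_fst A]
      measurable_compose[OF measurable_fst B] this]
  show ?thesis by (simp add: case_prod_beta')
qed

lemma measurable_mix_measure:
  assumes "p \<in> borel_measurable M" "A \<in> M \<rightarrow>\<^sub>M prob_algebra N" "B \<in> M \<rightarrow>\<^sub>M prob_algebra N"
  shows "(\<lambda>x. mix_measure (p x) (A x) (B x)) \<in> M \<rightarrow>\<^sub>M prob_algebra N"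
  unfolding mix_measure_def
  by (rule measurable_bind_prob_space2[OF _ measurable_mix_selector[OF assms]])
    (simp add: unif01_in_prob_algebra)

lemma mix_measure_in_prob_algebra:
  "A \<in> space (prob_algebra N) \<Longrightarrow> B \<in> space (prob_algebra N) \<Longrightarrow>
    mix_measure p A B \<in> space (prob_algebra N)"
  using measurable_space[OF measurable_mix_measure[of "\<lambda>_. p" "count_space UNIV" "\<lambda>_. A" N "\<lambda>_. B"]]
  by simp

lemma emeasure_mix_measure:
  assumes A: "A \<in> space (prob_algebra N)" and B: "B \<in> space (prob_algebra N)"
    and p: "p \<in> {0..1}" and S: "S \<in> sets N"
  shows "emeasure (mix_measure p A B) S = ennreal p * emeasure A S + ennreal (1 - p) * emeasure B S"
proof -
  have sel: "(\<lambda>t. if t \<le> p then A else B) \<in> borel \<rightarrow>\<^sub>M prob_algebra N"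
    using A B by measurable
  have "emeasure (mix_measure p A B) S = (\<integral>\<^sup>+t. emeasure (if t \<le> p then A else B) S \<partial>unif01)"
    unfolding mix_measure_def by (rule emeasure_bind_prob_algebra[OF unif01_in_prob_algebra sel S])
  also have "\<dots> = (\<integral>\<^sup>+t. emeasure A S * indicator {..p} t + emeasure B S * indicator {p<..} t \<partial>unif01)"
    by (intro nn_integral_cong) (auto split: split_indicator)
  also have "\<dots> = emeasure A S * emeasure unif01 {..p} + emeasure B S * emeasure unif01 {p<..}"
    by (simp add: nn_integral_add nn_integral_cmult_indicator)
  also have "\<dots> = ennreal p * emeasure A S + ennreal (1 - p) * emeasure B S"
    using p by (simp add: emeasure_unif01_atMost emeasure_unif01_greaterThan mult.commute)
  finally show ?thesis .
qed

lemma measure_mix_measure: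
  assumes A: "A \<in> space (prob_algebra N)" and B: "B \<in> space (prob_algebra N)"
    and p: "p \<in> {0..1}" and S: "S \<in> sets N"
  shows "measure (mix_measure p A B) S = p * measure A S + (1 - p) * measure B S"
proof -
  interpret A: prob_space A using A by (simp add: space_prob_algebra)
  interpret B: prob_space B using B by (simp add: space_prob_algebra)
  have "emeasure (mix_measure p A B) S = ennreal (p * measure A S + (1 - p) * measure B S)"
    using p by (simp add: emeasure_mix_measure[OF A B p S] A.emeasure_eq_measure
        B.emeasure_eq_measure ennreal_mult ennreal_plus)
  then show ?thesis using p by (simp add: measure_def del: ennreal_plus)
qed

lemma mix_measure_eqI:
  assumes A: "A \<in> space (prob_algebra N)" and B: "B \<in> space (prob_algebra N)"
    and C: "C \<in> space (prob_algebra N)" and p: "p \<in> {0..1}"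
    and eq: "\<And>S. S \<in> sets N \<Longrightarrow> emeasure C S = ennreal p * emeasure A S + ennreal (1 - p) * emeasure B S"
  shows "mix_measure p A B = C"
proof (rule measure_eqI)
  show sets: "sets (mix_measure p A B) = sets C"
    using mix_measure_in_prob_algebra[OF A B] C by (simp add: space_prob_algebra)
  show "emeasure (mix_measure p A B) S = emeasure C S" if "S \<in> sets (mix_measure p A B)" for S
    using that sets C by (simp add: emeasure_mix_measure[OF A B p] eq space_prob_algebra)
qed

lemma mix_measure_1: "A \<in> space (prob_algebra N) \<Longrightarrow> B \<in> space (prob_algebra N) \<Longrightarrow> mix_measure 1 A B = A"
  by (rule mix_measure_eqI) simp_all

lemma mix_measure_0: "A \<in> space (prob_algebra N) \<Longrightarrow> B \<in> space (prob_algebra N) \<Longrightarrow> mix_measure 0 A B = B"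
  by (rule mix_measure_eqI) simp_all

section \<open>Laws on the fibre of a covariate value\<close>

lemma measurable_bind_return_Pair:
  assumes "K \<in> (borel :: real measure) \<rightarrow>\<^sub>M prob_algebra (borel :: (real \<times> real) measure)"
  shows "(\<lambda>v. K v \<bind> (\<lambda>y. return borel (v, y))) \<in> borel \<rightarrow>\<^sub>M prob_algebra (borel :: (real \<times> real \<times> real) measure)"
proof (rule measurable_bind_prob_space2[OF assms])
  have "(\<lambda>p. p) \<in> (borel \<Otimes>\<^sub>M borel) \<rightarrow>\<^sub>M (borel :: (real \<times> real \<times> real) measure)"
    by (simp add: borel_prod)
  from measurable_compose[OF this measurable_return_prob_space]
  show "(\<lambda>(v, y). return borel (v, y)) \<in> borel \<Otimes>\<^sub>M borel \<rightarrow>\<^sub>M prob_algebra (borel :: (real \<times> real \<times> real) measure)"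
    by (simp add: case_prod_beta')
qed

locale fiber_kernels =
  fixes kV :: "'x \<Rightarrow> real \<Rightarrow> real measure"
    and kY :: "'x \<Rightarrow> real \<Rightarrow> real \<Rightarrow> (real \<times> real) measure"
    and x :: 'x
  assumes kV_section: "kV x \<in> borel \<rightarrow>\<^sub>M prob_algebra borel"
    and kY_section: "(\<lambda>(u, v). kY x u v) \<in> borel \<Otimes>\<^sub>M borel \<rightarrow>\<^sub>M prob_algebra borel"

lemma fiber_kernels_of_kernels:
  assumes "(\<lambda>(x, u). kV x u) \<in> M \<Otimes>\<^sub>M borel \<rightarrow>\<^sub>M prob_algebra borel"
    and "(\<lambda>(x, u, v). kY x u v) \<in> M \<Otimes>\<^sub>M (borel \<Otimes>\<^sub>M borel) \<rightarrow>\<^sub>M prob_algebra borel"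
    and "x \<in> space M"
  shows "fiber_kernels kV kY x"
  using measurable_compose[OF measurable_Pair1'[OF assms(3)] assms(1)]
    measurable_compose[OF measurable_Pair1'[OF assms(3)] assms(2)]
  by unfold_locales (simp_all add: case_prod_beta')

definition lawXZ :: "('x \<Rightarrow> real \<Rightarrow> real measure) \<Rightarrow> ('x \<Rightarrow> real \<Rightarrow> real \<Rightarrow> (real \<times> real) measure)
    \<Rightarrow> 'x \<Rightarrow> real \<Rightarrow> (real \<times> real \<times> real \<times> real \<times> real) measure" where
  "lawXZ kV kY x z = unif01 \<bind> (\<lambda>u. distr (lawVY kV kY x u) borel (\<lambda>t. (z, u, t)))"

context fiber_kernels
begin

lemma kV_in_prob_algebra: "kV x u \<in> space (prob_algebra borel)"
  using measurable_space[OF kV_section] by simp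

lemma kY_section_at: "kY x u \<in> borel \<rightarrow>\<^sub>M prob_algebra borel"
  using measurable_compose[OF measurable_Pair1'[of u borel borel] kY_section] by simp

lemma kY_in_prob_algebra: "kY x u v \<in> space (prob_algebra borel)"
  using measurable_space[OF kY_section_at] by simp

lemma measurable_lawVY: "(\<lambda>u. lawVY kV kY x u) \<in> borel \<rightarrow>\<^sub>M prob_algebra borel"
  unfolding lawVY_def
proof (rule measurable_bind_prob_space2[OF kV_section])
  have "(\<lambda>z. (snd (fst z), snd z)) \<in> (borel \<Otimes>\<^sub>M borel) \<Otimes>\<^sub>M borel \<rightarrow>\<^sub>M (borel \<Otimes>\<^sub>M (borel :: (real \<times> real) measure))"
    by measurable
  then have "(\<lambda>z. (snd (fst z), snd z)) \<in> (borel \<Otimes>\<^sub>M borel) \<Otimes>\<^sub>M borel \<rightarrow>\<^sub>M (borel :: (real \<times> real \<times> real) measure)"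
    by (simp add: borel_prod)
  from measurable_compose[OF this measurable_return_prob_space]
  have "(\<lambda>(uv, y). return borel (snd uv, y)) \<in> (borel \<Otimes>\<^sub>M borel) \<Otimes>\<^sub>M borel \<rightarrow>\<^sub>M prob_algebra (borel :: (real \<times> real \<times> real) measure)"
    by (simp add: case_prod_beta')
  from measurable_bind_prob_space2[OF kY_section this]
  show "(\<lambda>(u, v). kY x u v \<bind> (\<lambda>y. return borel (v, y))) \<in> borel \<Otimes>\<^sub>M borel \<rightarrow>\<^sub>M prob_algebra borel"
    by (simp add: case_prod_beta')
qed

lemma lawVY_in_prob_algebra: "lawVY kV kY x u \<in> space (prob_algebra borel)"
  using measurable_space[OF measurable_lawVY] by simp

lemma emeasure_lawVY:
  assumes S: "S \<in> sets borel"
  shows "emeasure (lawVY kV kY x u) S = (\<integral>\<^sup>+v. emeasure (kY x u v) (Pair v -` S) \<partial>kV x u)"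
proof -
  have "emeasure (lawVY kV kY x u) S = (\<integral>\<^sup>+v. emeasure (kY x u v \<bind> (\<lambda>y. return borel (v, y))) S \<partial>kV x u)"
    unfolding lawVY_def
    by (rule emeasure_bind_prob_algebra[OF kV_in_prob_algebra measurable_bind_return_Pair[OF kY_section_at] S])
  also have "\<dots> = (\<integral>\<^sup>+v. emeasure (kY x u v) (Pair v -` S) \<partial>kV x u)"
  proof (rule nn_integral_cong)
    fix v :: real
    have "Pair v \<in> (borel :: (real \<times> real) measure) \<rightarrow>\<^sub>M (borel :: (real \<times> real \<times> real) measure)"
      by measurable
    then show "emeasure (kY x u v \<bind> (\<lambda>y. return borel (v, y))) S = emeasure (kY x u v) (Pair v -` S)"
      using S by (simp add: bind_return_prob_algebra[OF kY_in_prob_algebra] emeasure_distr_prob_algebra[OF kY_in_prob_algebra])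
  qed
  finally show ?thesis .
qed

lemma emeasure_lawVY_Times_UNIV:
  assumes S: "S \<in> sets borel"
  shows "emeasure (lawVY kV kY x u) (S \<times> UNIV) = emeasure (kV x u) S"
proof -
  have "S \<times> UNIV \<in> sets (borel :: (real \<times> real \<times> real) measure)"
    using S by (intro borel_Times) auto
  then have "emeasure (lawVY kV kY x u) (S \<times> UNIV) = (\<integral>\<^sup>+v. indicator S v \<partial>kV x u)"
    using prob_space.emeasure_space_1[of "kY x u _"] kY_in_prob_algebra
    by (auto simp: emeasure_lawVY space_prob_algebra_borel space_prob_algebra vimage_def
        intro!: nn_integral_cong split: split_indicator)
  also have "\<dots> = emeasure (kV x u) S"
    using S sets_prob_algebra_borel[OF kV_in_prob_algebra] by simp
  finally show ?thesis .
qed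

lemma measurable_slice_lawVY:
  fixes z :: real
  shows "(\<lambda>u. distr (lawVY kV kY x u) borel (\<lambda>t. (z, u, t))) \<in> borel \<rightarrow>\<^sub>M prob_algebra (borel :: (real \<times> real \<times> real \<times> real \<times> real) measure)"
proof -
  have "(\<lambda>(u, t). (z, u, t)) \<in> borel \<Otimes>\<^sub>M borel \<rightarrow>\<^sub>M (borel :: (real \<times> real \<times> real \<times> real \<times> real) measure)"
    by (simp add: borel_prod[symmetric])
  from measurable_distr_prob_space2[OF measurable_lawVY this]
  show ?thesis by simp
qed

lemma emeasure_slice_lawVY:
  fixes z :: real
  assumes "A \<in> sets borel"
  shows "emeasure (distr (lawVY kV kY x u) borel (\<lambda>t. (z, u, t))) A = emeasure (lawVY kV kY x u) ((\<lambda>t. (z, u, t)) -` A)"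
  by (rule emeasure_distr_prob_algebra[OF lawVY_in_prob_algebra _ assms]) measurable

lemma measurable_emeasure_slice_lawVY:
  fixes z :: real
  assumes "A \<in> sets borel"
  shows "(\<lambda>u. emeasure (lawVY kV kY x u) ((\<lambda>t. (z, u, t)) -` A)) \<in> borel_measurable borel"
  using measurable_emeasure_kernel[OF measurable_slice_lawVY assms]
  by (simp add: emeasure_slice_lawVY[OF assms])

lemma measurable_lawXZ: "lawXZ kV kY x \<in> borel \<rightarrow>\<^sub>M prob_algebra borel"
proof -
  have "(\<lambda>(z :: real, u). distr (lawVY kV kY x u) borel (\<lambda>t. (z, u, t))) \<in> borel \<Otimes>\<^sub>M borel \<rightarrow>\<^sub>M prob_algebra borel"
  proof -
    have "(\<lambda>(zu, t). (fst zu, snd zu, t)) \<in> (borel \<Otimes>\<^sub>M borel) \<Otimes>\<^sub>M borel \<rightarrow>\<^sub>M (borel :: (real \<times> real \<times> real \<times> real \<times> real) measure)"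
      by (simp add: borel_prod[symmetric])
    from measurable_distr_prob_space2[OF measurable_compose[OF measurable_snd measurable_lawVY] this]
    show ?thesis by (simp add: case_prod_beta')
  qed
  then show ?thesis
    unfolding lawXZ_def[abs_def]
    by (rule measurable_bind_prob_space2[where N=borel, rotated]) (simp add: unif01_in_prob_algebra)
qed

lemma lawX_eq_bind_lawXZ: "lawX muZ kV kY x = muZ x \<bind> lawXZ kV kY x"
  unfolding lawX_def lawXZ_def
proof (intro bind_cong refl)
  fix z u :: real
  have "(\<lambda>t. (z, u, t)) \<in> (borel :: (real \<times> real \<times> real) measure) \<rightarrow>\<^sub>M (borel :: (real \<times> real \<times> real \<times> real \<times> real) measure)"
    by measurable
  from bind_return_prob_algebra[OF lawVY_in_prob_algebra this]
  show "lawVY kV kY x u \<bind> (\<lambda>(v, y0, y1). return borel (z, u, v, y0, y1)) = distr (lawVY kV kY x u) borel (\<lambda>t. (z, u, t))"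
    by (simp add: case_prod_beta')
qed

lemma emeasure_lawXZ:
  assumes A: "A \<in> sets borel"
  shows "emeasure (lawXZ kV kY x z) A = (\<integral>\<^sup>+u. emeasure (lawVY kV kY x u) ((\<lambda>t. (z, u, t)) -` A) \<partial>unif01)"
  unfolding lawXZ_def
  by (simp add: emeasure_bind_prob_algebra[OF unif01_in_prob_algebra measurable_slice_lawVY A]
      emeasure_slice_lawVY[OF A])

context
  fixes muZ :: "'x \<Rightarrow> real measure"
  assumes muZ_in_prob_algebra: "muZ x \<in> space (prob_algebra borel)"
begin

lemma emeasure_lawX:
  "A \<in> sets borel \<Longrightarrow> emeasure (lawX muZ kV kY x) A = (\<integral>\<^sup>+z. emeasure (lawXZ kV kY x z) A \<partial>muZ x)"
  unfolding lawX_eq_bind_lawXZ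
  by (rule emeasure_bind_prob_algebra[OF muZ_in_prob_algebra measurable_lawXZ])

lemma lawX_in_prob_algebra: "lawX muZ kV kY x \<in> space (prob_algebra borel)"
  unfolding lawX_eq_bind_lawXZ
  using prob_space_bind'[OF muZ_in_prob_algebra measurable_lawXZ]
    sets_bind'[OF muZ_in_prob_algebra measurable_lawXZ]
  by (simp add: space_prob_algebra)

lemma kV_outside_unit_null:
  assumes V: "distr (lawX muZ kV kY x) borel Vof = unif01"
  shows "(\<integral>\<^sup>+u. emeasure (kV x u) (- {0..1}) \<partial>unif01) = 0"
proof -
  have Vof: "Vof \<in> (borel :: (real \<times> real \<times> real \<times> real \<times> real) measure) \<rightarrow>\<^sub>M borel"
    unfolding Vof_def[abs_def] by (intro borel_measurable_continuous_onI continuous_intros)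
  have out: "- {0..1::real} \<in> sets borel" by simp
  have "Vof -` (- {0..1}) \<in> sets (borel :: (real \<times> real \<times> real \<times> real \<times> real) measure)"
    using measurable_sets[OF Vof out] by simp
  moreover have "(\<lambda>t. (z, u, t)) -` (Vof -` (- {0..1})) = (- {0..1}) \<times> UNIV" for z u :: real
    by (auto simp: Vof_def)
  ultimately have "emeasure (lawX muZ kV kY x) (Vof -` (- {0..1})) =
      (\<integral>\<^sup>+z. (\<integral>\<^sup>+u. emeasure (kV x u) (- {0..1}) \<partial>unif01) \<partial>muZ x)"
    by (simp add: emeasure_lawX emeasure_lawXZ emeasure_lawVY_Times_UNIV[OF out])
  also have "\<dots> = (\<integral>\<^sup>+u. emeasure (kV x u) (- {0..1}) \<partial>unif01)"
    using muZ_in_prob_algebra by (simp add: space_prob_algebra prob_space.emeasure_space_1)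
  finally show ?thesis
    using emeasure_distr_prob_algebra[OF lawX_in_prob_algebra Vof out] V
    by (simp add: emeasure_unif01)
qed

end

end

lemma emeasure_lawX_le:
  assumes K: "fiber_kernels kV kY x" and K': "fiber_kernels kV' kY' x"
    and muZ: "muZ x \<in> space (prob_algebra borel)"
    and A: "A \<in> sets borel" and H: "H \<in> borel_measurable borel"
    and slice_le: "\<And>z u. emeasure (lawVY kV kY x u) ((\<lambda>t. (z, u, t)) -` A)
        \<le> emeasure (lawVY kV' kY' x u) ((\<lambda>t. (z, u, t)) -` A) + H u"
    and H_le: "(\<integral>\<^sup>+u. H u \<partial>unif01) \<le> ennreal e"
  shows "emeasure (lawX muZ kV kY x) A \<le> emeasure (lawX muZ kV' kY' x) A + ennreal e"
proof -
  interpret K: fiber_kernels kV kY x by (rule K)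
  interpret K': fiber_kernels kV' kY' x by (rule K')
  have lawXZ_le: "emeasure (lawXZ kV kY x z) A \<le> emeasure (lawXZ kV' kY' x z) A + ennreal e" for z
  proof -
    have "emeasure (lawXZ kV kY x z) A \<le> (\<integral>\<^sup>+u. emeasure (lawVY kV' kY' x u) ((\<lambda>t. (z, u, t)) -` A) + H u \<partial>unif01)"
      unfolding K.emeasure_lawXZ[OF A] by (intro nn_integral_mono slice_le)
    also have "\<dots> = emeasure (lawXZ kV' kY' x z) A + (\<integral>\<^sup>+u. H u \<partial>unif01)"
      using K'.measurable_emeasure_slice_lawVY[OF A] H
      by (simp add: nn_integral_add K'.emeasure_lawXZ[OF A])
    finally show ?thesis using H_le by (meson add_left_mono order_trans)
  qed
  have "emeasure (lawX muZ kV kY x) A \<le> (\<integral>\<^sup>+z. emeasure (lawXZ kV' kY' x z) A + ennreal e \<partial>muZ x)"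
    unfolding K.emeasure_lawX[of muZ, OF muZ A] by (intro nn_integral_mono lawXZ_le)
  also have "\<dots> = emeasure (lawX muZ kV' kY' x) A + ennreal e"
    using measurable_emeasure_kernel[OF K'.measurable_lawXZ A] muZ
    by (simp add: nn_integral_add K'.emeasure_lawX[of muZ, OF muZ A] space_prob_algebra
        prob_space.emeasure_space_1 measurable_cong_sets[OF sets_prob_algebra_borel[OF muZ] refl])
  finally show ?thesis .
qed

lemma sets_cdf_event:
  assumes "P x \<in> borel_measurable borel"
  shows "{w. Yobs P Q x w \<le> y \<and> Dobs P x w \<le> d \<and> Sobs P Q x w \<le> s \<and> Zof w \<le> z} \<in> sets borel"
proof -
  have coord: "Zof \<in> borel_measurable borel" "Uof \<in> borel_measurable borel" "Vof \<in> borel_measurable borel"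
    "Ystar k \<in> borel_measurable borel"
    for k
    unfolding Zof_def[abs_def] Uof_def[abs_def] Vof_def[abs_def] Ystar_def[abs_def]
    by (cases "k = 1"; simp; intro borel_measurable_continuous_onI continuous_intros)+
  have "Dobs P x \<in> borel_measurable borel" "Sd Q k x \<in> borel_measurable borel" for k
    unfolding Dobs_def[abs_def] Sd_def[abs_def]
    using coord measurable_compose[OF coord(1) assms] by measurable
  then have "Sobs P Q x \<in> borel_measurable borel" "Yobs P Q x \<in> borel_measurable borel"
    unfolding Sobs_def[abs_def] Yobs_def[abs_def] Yd_def[abs_def] using coord by measurable
  then show ?thesis
    using coord \<open>Dobs P x \<in> borel_measurable borel\<close> by measurable
qed

section \<open>The perturbed kernels\<close>

definition bump :: "real \<Rightarrow> real \<Rightarrow> real \<Rightarrow> real" where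
  "bump h c u = max 0 (1 - \<bar>u - c\<bar> * inverse h)"

lemma bump_range: "h > 0 \<Longrightarrow> bump h c u \<in> {0..1}"
  by (auto simp: bump_def)

lemma bump_center: "h > 0 \<Longrightarrow> bump h c c = 1"
  by (simp add: bump_def)

lemma bump_eq_0: "\<bar>u - c\<bar> \<ge> h \<Longrightarrow> h > 0 \<Longrightarrow> bump h c u = 0"
  by (simp add: bump_def field_simps)

lemma continuous_on_bump: "continuous_on S (bump h c)"
  unfolding bump_def by (intro continuous_intros)

lemma measurable_bump [measurable]: "bump h c \<in> borel_measurable borel"
  by (intro borel_measurable_continuous_onI continuous_on_bump)

text \<open>
Clamping V into [0,1] enforces the support condition for every u, not only almost every u. As
V given X is uniform, \<open>kV x u\<close> already lives on [0,1] for almost every u, so clamping does not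
change the observable law (\<open>kV_outside_unit_null\<close>).
\<close>

definition clamp01 :: "real \<Rightarrow> real" where
  "clamp01 v = max 0 (min 1 v)"

lemma measurable_clamp01 [measurable]: "clamp01 \<in> borel_measurable borel"
  unfolding clamp01_def by measurable

lemma clamp01_id: "v \<in> {0..1} \<Longrightarrow> clamp01 v = v"
  by (auto simp: clamp01_def)

lemma vimage_clamp01_atMost:
  "clamp01 -` {..v} = (if v < 0 then {} else if v \<ge> 1 then UNIV else {..v})"
  by (auto simp: clamp01_def)

definition kV_perturb :: "real \<Rightarrow> real \<Rightarrow> ('x \<Rightarrow> real \<Rightarrow> real measure) \<Rightarrow> 'x \<Rightarrow> real \<Rightarrow> real measure" where
  "kV_perturb h c kV x u = mix_measure (bump h c u) unif01 (distr (kV x u) borel clamp01)"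

definition kY_perturb :: "real \<Rightarrow> real \<Rightarrow> real \<Rightarrow> ('x \<Rightarrow> real \<Rightarrow> real \<Rightarrow> (real \<times> real) measure)
    \<Rightarrow> 'x \<Rightarrow> real \<Rightarrow> real \<Rightarrow> (real \<times> real) measure" where
  "kY_perturb h c d kY x u v = mix_measure (bump h c u) (return borel (0, d)) (kY x u v)"

lemma measurable_kV_perturb:
  assumes "(\<lambda>(x, u). kV x u) \<in> M \<Otimes>\<^sub>M borel \<rightarrow>\<^sub>M prob_algebra borel"
  shows "(\<lambda>(x, u). kV_perturb h c kV x u) \<in> M \<Otimes>\<^sub>M borel \<rightarrow>\<^sub>M prob_algebra borel"
proof -
  have "(\<lambda>xu. kV (fst xu) (snd xu)) \<in> M \<Otimes>\<^sub>M borel \<rightarrow>\<^sub>M prob_algebra borel"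
    using assms by (simp add: case_prod_beta')
  moreover have "(\<lambda>(xu, v). clamp01 v) \<in> (M \<Otimes>\<^sub>M borel) \<Otimes>\<^sub>M borel \<rightarrow>\<^sub>M borel"
    by measurable
  ultimately have "(\<lambda>xu. distr (kV (fst xu) (snd xu)) borel clamp01) \<in> M \<Otimes>\<^sub>M borel \<rightarrow>\<^sub>M prob_algebra borel"
    using measurable_distr_prob_space2 by fastforce
  from measurable_mix_measure[OF _ _ this, of "\<lambda>xu. bump h c (snd xu)" "\<lambda>_. unif01"]
  show ?thesis
    by (simp add: kV_perturb_def case_prod_beta' unif01_in_prob_algebra)
qed

lemma measurable_kY_perturb:
  assumes "(\<lambda>(x, u, v). kY x u v) \<in> M \<Otimes>\<^sub>M (borel \<Otimes>\<^sub>M borel) \<rightarrow>\<^sub>M prob_algebra borel"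
  shows "(\<lambda>(x, u, v). kY_perturb h c d kY x u v) \<in> M \<Otimes>\<^sub>M (borel \<Otimes>\<^sub>M borel) \<rightarrow>\<^sub>M prob_algebra borel"
proof -
  have "(\<lambda>xuv. kY (fst xuv) (fst (snd xuv)) (snd (snd xuv))) \<in> M \<Otimes>\<^sub>M (borel \<Otimes>\<^sub>M borel) \<rightarrow>\<^sub>M prob_algebra borel"
    using assms by (simp add: case_prod_beta')
  from measurable_mix_measure[OF _ _ this, of "\<lambda>xuv. bump h c (fst (snd xuv))" "\<lambda>_. return borel (0, d)"]
  show ?thesis
    by (simp add: kY_perturb_def case_prod_beta' return_in_prob_algebra)
qed

lemma fiber_kernels_perturb:
  assumes "fiber_kernels kV kY x"
  shows "fiber_kernels (kV_perturb h c kV) (kY_perturb h c d kY) x"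
proof
  interpret fiber_kernels kV kY x by (rule assms)
  have "(\<lambda>(u, v). clamp01 v) \<in> borel \<Otimes>\<^sub>M borel \<rightarrow>\<^sub>M (borel :: real measure)"
    by measurable
  from measurable_distr_prob_space2[OF kV_section this]
  have "(\<lambda>u. distr (kV x u) borel clamp01) \<in> borel \<rightarrow>\<^sub>M prob_algebra borel"
    by simp
  from measurable_mix_measure[OF measurable_bump _ this, of "\<lambda>_. unif01"]
  show "kV_perturb h c kV x \<in> borel \<rightarrow>\<^sub>M prob_algebra borel"
    by (simp add: kV_perturb_def[abs_def] unif01_in_prob_algebra)
  have "(\<lambda>uv. kY x (fst uv) (snd uv)) \<in> borel \<Otimes>\<^sub>M borel \<rightarrow>\<^sub>M prob_algebra borel"
    using kY_section by (simp add: case_prod_beta')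
  from measurable_mix_measure[OF _ _ this, of "\<lambda>uv. bump h c (fst uv)" "\<lambda>_. return borel (0, d)"]
  show "(\<lambda>(u, v). kY_perturb h c d kY x u v) \<in> borel \<Otimes>\<^sub>M borel \<rightarrow>\<^sub>M prob_algebra borel"
    by (simp add: kY_perturb_def case_prod_beta' return_in_prob_algebra)
qed

context fiber_kernels
begin

lemma measurable_emeasure_kY_Pair:
  assumes S: "S \<in> sets (borel :: (real \<times> real \<times> real) measure)"
  shows "(\<lambda>v. emeasure (kY x u v) (Pair v -` S)) \<in> borel_measurable borel"
proof (rule emeasure_measurable_subprob_algebra2[OF _ measurable_prob_algebraD[OF kY_section_at]])
  have "(SIGMA v:space borel. Pair v -` S) = S"
    by auto
  moreover have "sets (borel \<Otimes>\<^sub>M (borel :: (real \<times> real) measure)) = sets (borel :: (real \<times> real \<times> real) measure)"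
    by (simp only: borel_prod)
  ultimately show "(SIGMA v:space borel. Pair v -` S) \<in> sets (borel \<Otimes>\<^sub>M (borel :: (real \<times> real) measure))"
    using S by simp
qed

context
  fixes h c d :: real
  assumes h: "h > 0"
begin

lemma continuous_cdf_kV_perturb:
  assumes cont: "continuous_on {0..1} (\<lambda>u. measure (kV x u) {..v})"
  shows "continuous_on {0..1} (\<lambda>u. measure (kV_perturb h c kV x u) {..v})"
proof -
  define F where "F u = measure (kV x u) (clamp01 -` {..v})" for u
  have "measure (kV_perturb h c kV x u) {..v} = bump h c u * measure unif01 {..v} + (1 - bump h c u) * F u" for u
    unfolding kV_perturb_def F_def
    by (simp add: measure_mix_measure[OF unif01_in_prob_algebra distr_in_prob_algebra[OF kV_in_prob_algebra]
          bump_range[OF h]] measure_distr_prob_algebra[OF kV_in_prob_algebra])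
  moreover have "continuous_on {0..1} F"
    using cont prob_space.prob_space[of "kV x _"] kV_in_prob_algebra
    by (simp add: F_def vimage_clamp01_atMost space_prob_algebra space_prob_algebra_borel)
  ultimately show ?thesis
    by (simp add: continuous_on_bump continuous_intros)
qed

lemma continuous_cdf_kY_perturb:
  assumes cont: "continuous_on {0..1} (\<lambda>u. measure (kY x u v) ({..y0} \<times> {..y1}))"
  shows "continuous_on {0..1} (\<lambda>u. measure (kY_perturb h c d kY x u v) ({..y0} \<times> {..y1}))"
proof -
  have "{..y0} \<times> {..y1} \<in> sets (borel :: (real \<times> real) measure)"
    by (intro borel_Times) auto
  then show ?thesis
    using cont unfolding kY_perturb_def
    by (simp add: measure_mix_measure[OF return_in_prob_algebra kY_in_prob_algebra bump_range[OF h]]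
        continuous_on_bump continuous_intros)
qed

lemma lawVY_perturb_center:
  "lawVY (kV_perturb h c kV) (kY_perturb h c d kY) x c = distr unif01 borel (\<lambda>v. (v, 0, d))"
proof -
  have "kV_perturb h c kV x c = unif01"
    unfolding kV_perturb_def bump_center[OF h]
    by (rule mix_measure_1[OF unif01_in_prob_algebra distr_in_prob_algebra[OF kV_in_prob_algebra]]) simp
  moreover have "kY_perturb h c d kY x c v = return borel (0, d)" for v
    unfolding kY_perturb_def bump_center[OF h]
    by (rule mix_measure_1[OF return_in_prob_algebra kY_in_prob_algebra])
  moreover have "return borel (0::real, d) \<bind> (\<lambda>y. return borel (v, y)) = return borel (v, 0::real, d)" for v :: real
  proof -
    have "(\<lambda>y. return borel (v, y)) \<in> (borel :: (real \<times> real) measure) \<rightarrow>\<^sub>M subprob_algebra (borel :: (real \<times> real \<times> real) measure)"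
      by (intro measurable_prob_algebraD measurable_compose[OF _ measurable_return_prob_space]) simp
    from bind_return[OF this] show ?thesis by simp
  qed
  moreover have "(\<lambda>v. (v, 0::real, d)) \<in> (borel :: real measure) \<rightarrow>\<^sub>M (borel :: (real \<times> real \<times> real) measure)"
    by simp
  ultimately show ?thesis
    by (simp add: lawVY_def bind_return_prob_algebra[OF unif01_in_prob_algebra])
qed

lemma measure_lawVY_perturb_unit_interval:
  "measure (lawVY (kV_perturb h c kV) (kY_perturb h c d kY) x u) ({0..1} \<times> UNIV) = 1"
proof -
  interpret perturbed: fiber_kernels "kV_perturb h c kV" "kY_perturb h c d kY" x
    by (rule fiber_kernels_perturb[OF fiber_kernels_axioms])
  have unit: "{0..1::real} \<in> sets borel" by simp
  have "emeasure (distr (kV x u) borel clamp01) {0..1} = 1"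
    using kV_in_prob_algebra prob_space.emeasure_space_1[of "kV x u"]
    by (simp add: emeasure_distr_prob_algebra[OF kV_in_prob_algebra] clamp01_def vimage_def
        space_prob_algebra space_prob_algebra_borel)
  then have "emeasure (lawVY (kV_perturb h c kV) (kY_perturb h c d kY) x u) ({0..1} \<times> UNIV) = 1"
    using bump_range[OF h, of c u]
    by (simp add: perturbed.emeasure_lawVY_Times_UNIV[OF unit] kV_perturb_def emeasure_unif01
        emeasure_mix_measure[OF unif01_in_prob_algebra distr_in_prob_algebra[OF kV_in_prob_algebra]]
        ennreal_plus[symmetric] del: ennreal_plus)
  then show ?thesis by (simp add: measure_def)
qed

lemma emeasure_lawVY_perturb_far:
  assumes far: "\<bar>u - c\<bar> \<ge> h" and S: "S \<in> sets borel"
  shows "emeasure (lawVY (kV_perturb h c kV) (kY_perturb h c d kY) x u) S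
      \<le> emeasure (lawVY kV kY x u) S + emeasure (kV x u) (- {0..1})"
    and "emeasure (lawVY kV kY x u) S
      \<le> emeasure (lawVY (kV_perturb h c kV) (kY_perturb h c d kY) x u) S + emeasure (kV x u) (- {0..1})"
proof -
  interpret perturbed: fiber_kernels "kV_perturb h c kV" "kY_perturb h c d kY" x
    by (rule fiber_kernels_perturb[OF fiber_kernels_axioms])
  define G where "G v = emeasure (kY x u v) (Pair v -` S)" for v
  have "G \<in> borel_measurable borel"
    unfolding G_def[abs_def] by (rule measurable_emeasure_kY_Pair[OF S])
  then have G: "G \<in> borel_measurable (kV x u)" "(\<lambda>v. G (clamp01 v)) \<in> borel_measurable (kV x u)"
    by (simp_all add: measurable_prob_algebra_borel[OF kV_in_prob_algebra])
  have G_le_1: "G v \<le> 1" for v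
    unfolding G_def by (rule emeasure_le_1_prob_algebra[OF kY_in_prob_algebra])
  have out: "- {0..1} \<in> sets (kV x u)"
    using sets_prob_algebra_borel[OF kV_in_prob_algebra] by simp
  have "kV_perturb h c kV x u = distr (kV x u) borel clamp01"
    unfolding kV_perturb_def bump_eq_0[OF far h]
    by (rule mix_measure_0[OF unif01_in_prob_algebra distr_in_prob_algebra[OF kV_in_prob_algebra]]) simp
  moreover have "kY_perturb h c d kY x u v = kY x u v" for v
    unfolding kY_perturb_def bump_eq_0[OF far h]
    by (rule mix_measure_0[OF return_in_prob_algebra kY_in_prob_algebra])
  ultimately have perturbed: "emeasure (lawVY (kV_perturb h c kV) (kY_perturb h c d kY) x u) S = (\<integral>\<^sup>+v. G (clamp01 v) \<partial>kV x u)"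
    using measurable_emeasure_kY_Pair[OF S]
    by (simp add: perturbed.emeasure_lawVY[OF S] G_def nn_integral_distr
        measurable_prob_algebra_borel[OF kV_in_prob_algebra])
  have original: "emeasure (lawVY kV kY x u) S = (\<integral>\<^sup>+v. G v \<partial>kV x u)"
    unfolding G_def by (rule emeasure_lawVY[OF S])
  show "emeasure (lawVY (kV_perturb h c kV) (kY_perturb h c d kY) x u) S
      \<le> emeasure (lawVY kV kY x u) S + emeasure (kV x u) (- {0..1})"
    unfolding perturbed original
    by (rule nn_integral_le_plus_emeasure[OF G(1) out]) (simp_all add: clamp01_id G_le_1)
  show "emeasure (lawVY kV kY x u) S
      \<le> emeasure (lawVY (kV_perturb h c kV) (kY_perturb h c d kY) x u) S + emeasure (kV x u) (- {0..1})"
    unfolding perturbed original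
    by (rule nn_integral_le_plus_emeasure[OF G(2) out]) (simp_all add: clamp01_id G_le_1)
qed

lemma emeasure_lawVY_perturb_le:
  fixes u :: real
  assumes S: "S \<in> sets borel"
  defines "err \<equiv> indicator {c - h<..<c + h} u + emeasure (kV x u) (- {0..1})"
  shows "emeasure (lawVY (kV_perturb h c kV) (kY_perturb h c d kY) x u) S \<le> emeasure (lawVY kV kY x u) S + err"
    and "emeasure (lawVY kV kY x u) S \<le> emeasure (lawVY (kV_perturb h c kV) (kY_perturb h c d kY) x u) S + err"
proof -
  interpret perturbed: fiber_kernels "kV_perturb h c kV" "kY_perturb h c d kY" x
    by (rule fiber_kernels_perturb[OF fiber_kernels_axioms])
  have "emeasure (lawVY (kV_perturb h c kV) (kY_perturb h c d kY) x u) S \<le> emeasure (lawVY kV kY x u) S + err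
      \<and> emeasure (lawVY kV kY x u) S \<le> emeasure (lawVY (kV_perturb h c kV) (kY_perturb h c d kY) x u) S + err"
  proof (cases "\<bar>u - c\<bar> < h")
    case True
    then have "err = 1 + emeasure (kV x u) (- {0..1})"
      by (simp add: err_def abs_less_iff)
    then show ?thesis
      using emeasure_le_1_prob_algebra[OF lawVY_in_prob_algebra, of u S]
        emeasure_le_1_prob_algebra[OF perturbed.lawVY_in_prob_algebra, of u S]
      by (auto intro: order_trans add_increasing2 add_increasing)
  next
    case False
    then have "err = emeasure (kV x u) (- {0..1})"
      by (auto simp: err_def abs_less_iff)
    then show ?thesis
      using emeasure_lawVY_perturb_far[OF _ S] False by simp
  qed
  then show "emeasure (lawVY (kV_perturb h c kV) (kY_perturb h c d kY) x u) S \<le> emeasure (lawVY kV kY x u) S + err"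
    and "emeasure (lawVY kV kY x u) S \<le> emeasure (lawVY (kV_perturb h c kV) (kY_perturb h c d kY) x u) S + err"
    by auto
qed

lemma lawX_perturb_close:
  assumes muZ: "muZ x \<in> space (prob_algebra borel)"
    and V: "distr (lawX muZ kV kY x) borel Vof = unif01"
    and A: "A \<in> sets borel"
  shows "\<bar>measure (lawX muZ (kV_perturb h c kV) (kY_perturb h c d kY) x) A - measure (lawX muZ kV kY x) A\<bar> \<le> 2 * h"
proof -
  interpret perturbed: fiber_kernels "kV_perturb h c kV" "kY_perturb h c d kY" x
    by (rule fiber_kernels_perturb[OF fiber_kernels_axioms])
  define H where "H u = indicator {c - h<..<c + h} u + emeasure (kV x u) (- {0..1})" for u
  have out: "- {0..1::real} \<in> sets borel" by simp
  have H: "H \<in> borel_measurable borel"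
    unfolding H_def[abs_def] using measurable_emeasure_kernel[OF kV_section out] by measurable
  have "(\<integral>\<^sup>+u. H u \<partial>unif01) = emeasure unif01 {c - h<..<c + h} + (\<integral>\<^sup>+u. emeasure (kV x u) (- {0..1}) \<partial>unif01)"
    using measurable_emeasure_kernel[OF kV_section out] by (simp add: H_def nn_integral_add)
  also have "\<dots> \<le> ennreal (2 * h)"
    using kV_outside_unit_null[of muZ, OF muZ V] emeasure_unif01_ball_le by simp
  finally have H_le: "(\<integral>\<^sup>+u. H u \<partial>unif01) \<le> ennreal (2 * h)" .
  have slice: "(\<lambda>t. (z, u, t)) -` A \<in> sets borel" for z u :: real
    using measurable_sets[OF _ A, of "\<lambda>t. (z, u, t)" borel] by simp
  show ?thesis
  proof (rule abs_measure_diff_le[OF perturbed.lawX_in_prob_algebra[of muZ, OF muZ]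
        lawX_in_prob_algebra[of muZ, OF muZ]])
    show "emeasure (lawX muZ (kV_perturb h c kV) (kY_perturb h c d kY) x) A
        \<le> emeasure (lawX muZ kV kY x) A + ennreal (2 * h)"
      by (rule emeasure_lawX_le[of _ _ _ _ _ muZ, OF perturbed.fiber_kernels_axioms
            fiber_kernels_axioms muZ A H _ H_le])
        (simp add: H_def emeasure_lawVY_perturb_le(1)[OF slice])
    show "emeasure (lawX muZ kV kY x) A
        \<le> emeasure (lawX muZ (kV_perturb h c kV) (kY_perturb h c d kY) x) A + ennreal (2 * h)"
      by (rule emeasure_lawX_le[of _ _ _ _ _ muZ, OF fiber_kernels_axioms
            perturbed.fiber_kernels_axioms muZ A H _ H_le])
        (simp add: H_def emeasure_lawVY_perturb_le(2)[OF slice])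
  qed (use h in simp)
qed

end

end

section \<open>The conditional mean at the centre of the perturbation\<close>

lemma
  fixes g :: "'a \<Rightarrow> real"
  assumes L: "prob_space L" and E: "E \<in> sets L" "emeasure L E \<noteq> 0"
    and g: "g \<in> borel_measurable L" and g_ae: "AE w in L. g w = d"
  shows integrable_uniform_measure_AE_const: "integrable (uniform_measure L E) g"
    and integral_uniform_measure_AE_const: "(\<integral>w. g w \<partial>uniform_measure L E) = d"
proof -
  interpret L: prob_space L by (rule L)
  interpret U: prob_space "uniform_measure L E"
    using E by (intro prob_space_uniform_measure) auto
  have ae: "AE w in uniform_measure L E. g w = d"
    using E g_ae by (intro AE_uniform_measureI) auto
  have g': "g \<in> borel_measurable (uniform_measure L E)"
    using g by simp
  show "integrable (uniform_measure L E) g"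
    using integrable_cong_AE[OF g' _ ae] by simp
  have "(\<integral>w. g w \<partial>uniform_measure L E) = (\<integral>w. d \<partial>uniform_measure L E)"
    by (rule integral_cong_AE[OF g' _ ae]) simp
  then show "(\<integral>w. g w \<partial>uniform_measure L E) = d"
    using U.prob_space by simp
qed

lemma conditional_mean_diff_point_mass:
  fixes q0 q1 d :: real
  assumes q: "0 < q0" "q0 \<le> q1" "q0 \<le> 1"
  shows "let L = distr unif01 borel (\<lambda>v. (v, 0::real, d));
           E = {(v, y0, y1). q0 \<ge> v \<and> q1 \<ge> v};
           g = (\<lambda>(v, y0, y1). y1 - y0)
       in measure L E > 0 \<and> integrable (uniform_measure L E) g
          \<and> (\<integral>w. g w \<partial>uniform_measure L E) = d"
proof -
  define L where "L = distr unif01 borel (\<lambda>v. (v, 0::real, d))"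
  define g :: "real \<times> real \<times> real \<Rightarrow> real" where "g = (\<lambda>(v, y0, y1). y1 - y0)"
  have E: "{(v, y0, y1). q0 \<ge> v \<and> q1 \<ge> v} = {..q0} \<times> (UNIV :: (real \<times> real) set)"
    using q by auto
  have emb: "(\<lambda>v. (v, 0::real, d)) \<in> (borel :: real measure) \<rightarrow>\<^sub>M (borel :: (real \<times> real \<times> real) measure)"
    by simp
  have L: "L \<in> space (prob_algebra borel)"
    unfolding L_def by (rule distr_in_prob_algebra[OF unif01_in_prob_algebra emb])
  then interpret L: prob_space L by (simp add: space_prob_algebra)
  have sets_E: "{..q0} \<times> UNIV \<in> sets (borel :: (real \<times> real \<times> real) measure)"
    by (intro borel_Times) auto
  have "(\<lambda>v. (v, 0::real, d)) -` ({..q0} \<times> UNIV) = {..q0}"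
    by auto
  then have LE: "emeasure L ({..q0} \<times> UNIV) = ennreal q0"
    using q by (simp add: L_def emeasure_distr_prob_algebra[OF unif01_in_prob_algebra emb sets_E]
        emeasure_unif01_atMost)
  have g: "g \<in> borel_measurable (borel :: (real \<times> real \<times> real) measure)"
    unfolding g_def case_prod_beta' by (intro borel_measurable_continuous_onI continuous_intros)
  have "AE w in L. g w = d"
  proof (rule AE_I')
    have "{w. g w \<noteq> d} \<in> sets borel"
      using g by measurable
    moreover have "(\<lambda>v. (v, 0::real, d)) -` {w. g w \<noteq> d} = {}"
      by (simp add: g_def)
    ultimately show "{w. g w \<noteq> d} \<in> null_sets L"
      by (simp add: L_def null_sets_def emeasure_distr_prob_algebra[OF unif01_in_prob_algebra emb])
  qed auto
  moreover have "{..q0} \<times> UNIV \<in> sets L" "emeasure L ({..q0} \<times> UNIV) \<noteq> 0" "g \<in> borel_measurable L"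
    using sets_E LE q g by (simp_all add: L_def)
  ultimately show ?thesis
    unfolding Let_def L_def[symmetric] g_def[symmetric] E
    using LE q
    by (simp add: L.emeasure_eq_measure integrable_uniform_measure_AE_const[OF L.prob_space_axioms]
        integral_uniform_measure_AE_const[OF L.prob_space_axioms])
qed

theorem propositionG2:
  fixes muX :: "'x measure"
    and XX :: "'x set" and ZZ :: "real set"
    and muZ :: "'x \<Rightarrow> real measure"
    and kV :: "'x \<Rightarrow> real \<Rightarrow> real measure"
    and kY :: "'x \<Rightarrow> real \<Rightarrow> real \<Rightarrow> (real \<times> real) measure"
    and P :: "'x \<Rightarrow> real \<Rightarrow> real"
    and Q :: "nat \<Rightarrow> 'x \<Rightarrow> real"
    and eps :: real and ubar :: real and xbar :: 'x and delta :: real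
  assumes muX: "prob_space muX"
    and XX: "XX \<subseteq> space muX" "AE x in muX. x \<in> XX"
    and muZ_kernel: "muZ \<in> muX \<rightarrow>\<^sub>M prob_algebra borel"
    and kV_kernel: "(\<lambda>(x, u). kV x u) \<in> muX \<Otimes>\<^sub>M borel \<rightarrow>\<^sub>M prob_algebra borel"
    and kY_kernel: "(\<lambda>(x, u, v). kY x u v) \<in> muX \<Otimes>\<^sub>M (borel \<Otimes>\<^sub>M borel) \<rightarrow>\<^sub>M prob_algebra borel"
    and ZZ: "\<forall>x\<in>XX. AE z in muZ x. z \<in> ZZ"
    and P_meas: "\<forall>x. P x \<in> borel_measurable borel"
    and P_range: "\<forall>x\<in>XX. \<forall>z\<in>ZZ. 0 \<le> P x z \<and> P x z \<le> 1"
    and Q_range: "\<forall>d\<in>{0,1}. \<forall>x\<in>XX. 0 \<le> Q d x \<and> Q d x \<le> 1"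
    \<comment> \<open>V | X is Uniform[0,1]; (U,V) | X jointly continuously distributed\<close>
    and V_unif: "\<forall>x\<in>XX. distr (lawX muZ kV kY x) borel Vof = unif01"
    and UV_cont: "\<forall>x\<in>XX. has_lebesgue_density (distr (lawX muZ kV kY x) borel (\<lambda>w. (Uof w, Vof w)))"
    \<comment> \<open>(A2)\<close>
    and A2: "\<forall>x\<in>XX. \<not> (\<exists>c. AE z in muZ x. P x z = c)"
    \<comment> \<open>(A3)\<close>
    and A3: "\<forall>d\<in>{0,1}. (\<integral>\<^sup>+x. (\<integral>\<^sup>+w. ennreal \<bar>Ystar d w\<bar> \<partial>lawX muZ kV kY x) \<partial>muX) < \<infinity>
                     \<and> (\<integral>\<^sup>+x. (\<integral>\<^sup>+w. ennreal ((Ystar d w)\<^sup>2) \<partial>lawX muZ kV kY x) \<partial>muX) < \<infinity>"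
    \<comment> \<open>(A4)\<close>
    and A4: "\<forall>x\<in>XX. 0 < measure (lawX muZ kV kY x) {w. Dobs P x w = 1}
                   \<and> measure (lawX muZ kV kY x) {w. Dobs P x w = 1} < 1"
    \<comment> \<open>(A6) with common support \<Y>* = \<real>\<close>
    and A6: "\<forall>d\<in>{0,1}. msupport (lawYstar muX muZ kV kY d) = UNIV"
    \<comment> \<open>(A8)\<close>
    and A8: "\<forall>x\<in>XX. Q 1 x > Q 0 x \<and> Q 0 x > 0"
    \<comment> \<open>(A10)\<close>
    and A10V: "\<forall>x\<in>XX. \<forall>v. continuous_on {0..1} (\<lambda>u. measure (kV x u) {..v})"
    and A10Y: "\<forall>x\<in>XX. \<forall>v y0 y1. continuous_on {0..1} (\<lambda>u. measure (kY x u v) ({..y0} \<times> {..y1}))"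
    \<comment> \<open>the data of the proposition\<close>
    and eps: "eps > 0"
    and ubar: "ubar \<in> {0..1}"
    and xbar: "xbar \<in> XX"
  shows "\<exists>kV' :: 'x \<Rightarrow> real \<Rightarrow> real measure. \<exists>kY' :: 'x \<Rightarrow> real \<Rightarrow> real \<Rightarrow> (real \<times> real) measure.
      (\<lambda>(x, u). kV' x u) \<in> muX \<Otimes>\<^sub>M borel \<rightarrow>\<^sub>M prob_algebra borel
    \<and> (\<lambda>(x, u, v). kY' x u v) \<in> muX \<Otimes>\<^sub>M (borel \<Otimes>\<^sub>M borel) \<rightarrow>\<^sub>M prob_algebra borel
    \<comment> \<open>(1)\<close>
    \<and> (let L = lawVY kV' kY' xbar ubar;
           E = {(v, y0, y1). Q 0 xbar \<ge> v \<and> Q 1 xbar \<ge> v};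
           g = (\<lambda>(v, y0, y1). y1 - y0)
       in measure L E > 0 \<and> integrable (uniform_measure L E) g
          \<and> (\<integral>w. g w \<partial>uniform_measure L E) = delta)
    \<comment> \<open>(2)\<close>
    \<and> (\<forall>u\<in>{0..1}. measure (lawVY kV' kY' xbar u)
          {(v, y0, y1). (y0, y1, v) \<in> (UNIV :: real set) \<times> (UNIV :: real set) \<times> {0..1}} = 1)
    \<comment> \<open>(3)\<close>
    \<and> (\<forall>x\<in>XX. \<forall>v. continuous_on {0..1} (\<lambda>u. measure (kV' x u) {..v}))
    \<comment> \<open>(4)\<close>
    \<and> (\<forall>x\<in>XX. \<forall>v y0 y1. continuous_on {0..1} (\<lambda>u. measure (kY' x u v) ({..y0} \<times> {..y1})))
    \<comment> \<open>(5)\<close>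
    \<and> (\<forall>y d s z. \<bar>cdfYDSZ P Q muZ kV' kY' xbar y d s z - cdfYDSZ P Q muZ kV kY xbar y d s z\<bar> \<le> eps)"
proof -
  define h where "h = eps / 2"
  have h: "h > 0" using eps by (simp add: h_def)
  define kV' where "kV' = kV_perturb h ubar kV"
  define kY' where "kY' = kY_perturb h ubar delta kY"
  have fiber: "fiber_kernels kV kY x" if "x \<in> XX" for x
    using fiber_kernels_of_kernels[OF kV_kernel kY_kernel] XX(1) that by blast
  interpret fiber_kernels kV kY xbar by (rule fiber[OF xbar])
  have muZ: "muZ xbar \<in> space (prob_algebra borel)"
    using measurable_space[OF muZ_kernel] XX(1) xbar by blast
  have V: "distr (lawX muZ kV kY xbar) borel Vof = unif01"
    using V_unif xbar by blast
  have Q: "0 < Q 0 xbar" "Q 0 xbar \<le> Q 1 xbar" "Q 0 xbar \<le> 1"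
    using A8 Q_range xbar by force+
  have support: "{(v, y0, y1). (y0, y1, v) \<in> (UNIV :: real set) \<times> (UNIV :: real set) \<times> {0..1}}
      = {0..1::real} \<times> (UNIV :: (real \<times> real) set)"
    by auto
  show ?thesis
  proof (intro exI[of _ kV'] exI[of _ kY'] conjI)
    show "(\<lambda>(x, u). kV' x u) \<in> muX \<Otimes>\<^sub>M borel \<rightarrow>\<^sub>M prob_algebra borel"
      unfolding kV'_def by (rule measurable_kV_perturb[OF kV_kernel])
    show "(\<lambda>(x, u, v). kY' x u v) \<in> muX \<Otimes>\<^sub>M (borel \<Otimes>\<^sub>M borel) \<rightarrow>\<^sub>M prob_algebra borel"
      unfolding kY'_def by (rule measurable_kY_perturb[OF kY_kernel])
    show "let L = lawVY kV' kY' xbar ubar;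
           E = {(v, y0, y1). Q 0 xbar \<ge> v \<and> Q 1 xbar \<ge> v};
           g = (\<lambda>(v, y0, y1). y1 - y0)
       in measure L E > 0 \<and> integrable (uniform_measure L E) g
          \<and> (\<integral>w. g w \<partial>uniform_measure L E) = delta"
      unfolding kV'_def kY'_def lawVY_perturb_center[OF h]
      by (rule conditional_mean_diff_point_mass[OF Q])
    show "\<forall>u\<in>{0..1}. measure (lawVY kV' kY' xbar u)
          {(v, y0, y1). (y0, y1, v) \<in> (UNIV :: real set) \<times> (UNIV :: real set) \<times> {0..1}} = 1"
      unfolding kV'_def kY'_def support
      by (simp add: measure_lawVY_perturb_unit_interval[OF h])
    show "\<forall>x\<in>XX. \<forall>v. continuous_on {0..1} (\<lambda>u. measure (kV' x u) {..v})"
      unfolding kV'_def using fiber_kernels.continuous_cdf_kV_perturb[OF fiber h] A10V by blast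
    show "\<forall>x\<in>XX. \<forall>v y0 y1. continuous_on {0..1} (\<lambda>u. measure (kY' x u v) ({..y0} \<times> {..y1}))"
      unfolding kY'_def using fiber_kernels.continuous_cdf_kY_perturb[OF fiber h] A10Y by blast
    have "{w. Yobs P Q xbar w \<le> y \<and> Dobs P xbar w \<le> d \<and> Sobs P Q xbar w \<le> s \<and> Zof w \<le> z} \<in> sets borel"
      for y d s z
      using P_meas by (simp add: sets_cdf_event)
    from lawX_perturb_close[OF h, where muZ=muZ, OF muZ V this]
    show "\<forall>y d s z. \<bar>cdfYDSZ P Q muZ kV' kY' xbar y d s z - cdfYDSZ P Q muZ kV kY xbar y d s z\<bar> \<le> eps"
      by (simp add: cdfYDSZ_def kV'_def kY'_def h_def)
  qed
qed

end
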